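(* Let $(p_i)_{i\geq1}$ enumerate the odd primes and let $\Lambda_1=(1,1)\mathbb{Z}+(0,2)\mathbb{Z}$, $\Lambda_2=\mathbb{Z}\times2\mathbb{Z}$, $\Lambda_{2i+1}=(2p_i,1)\mathbb{Z}+(0,2)\mathbb{Z}$ and $\Lambda_{2i+2}=(2^{i+1},1)\mathbb{Z}+(0,2)\mathbb{Z}$ for $i\geq1$. Let $\mathcal{M}_\mathscr{B}=\bigcup_{i\geq1}\Lambda_i$, $\mathcal{F}_\mathscr{B}=\mathbb{Z}^2\setminus\mathcal{M}_\mathscr{B}$, $\eta=\mathbb{1}_{\mathcal{F}_\mathscr{B}}$ and $X_\eta$ its orbit closure under the $\mathbb{Z}^2$-shift. Then $\mathcal{F}_\mathscr{B}=\{-2,0,2\}\times(2\mathbb{Z}+1)$, the system $(X_\eta,(S_{\mathbf{n}})_{\mathbf{n}\in\mathbb{Z}^2})$ is proximal, and there is no infinite pairwise coprime family $\{\widetilde\Lambda_j\}_{j\geq1}$ of proper lattices in $\mathbb{Z}^2$ with $\bigcup_{j\geq1}\widetilde\Lambda_j\subseteq\mathcal{M}_\mathscr{B}$.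
   Context: A lattice in $\mathbb{Z}^2$ is a subgroup of finite index; proper lattices $\Lambda,\Lambda'$ are coprime if $\Lambda+\Lambda'=\mathbb{Z}^2$. Shift: $(S_{\mathbf{n}}x)_{\mathbf{g}}=x_{\mathbf{g}+\mathbf{n}}$ on $\{0,1\}^{\mathbb{Z}^2}$ with the product topology; $X_\eta$ is the closure of the orbit of $\eta$. A system is proximal if every pair $(x,y)$ of its points satisfies $\liminf_{\mathbf{n}\to\infty}D(S_{\mathbf{n}}x,S_{\mathbf{n}}y)=0$ for a compatible metric $D$. *)

theory Defs
  imports "HOL-Analysis.Analysis" "HOL-Library.Liminf_Limsup"
begin

type_synonym pt = "int \<times> int"
type_synonym config = "pt \<Rightarrow> bool"

definition padd :: "pt \<Rightarrow> pt \<Rightarrow> pt" where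
  "padd a b = (fst a + fst b, snd a + snd b)"

definition is_lattice :: "pt set \<Rightarrow> bool" where
  "is_lattice L \<longleftrightarrow> (0, 0) \<in> L
     \<and> (\<forall>a\<in>L. \<forall>b\<in>L. padd a b \<in> L)
     \<and> (\<forall>a\<in>L. (- fst a, - snd a) \<in> L)
     \<and> finite ((\<lambda>g. (\<lambda>l. padd g l) ` L) ` UNIV)"

definition proper_lattice :: "pt set \<Rightarrow> bool" where
  "proper_lattice L \<longleftrightarrow> is_lattice L \<and> L \<noteq> UNIV"

definition lattice_coprime :: "pt set \<Rightarrow> pt set \<Rightarrow> bool" where
  "lattice_coprime L L' \<longleftrightarrow> {padd a b | a b. a \<in> L \<and> b \<in> L'} = UNIV"

definition gen2 :: "pt \<Rightarrow> pt \<Rightarrow> pt set" where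
  "gen2 v w = {(k * fst v + m * fst w, k * snd v + m * snd w) | k m. True}"

definition Lam1 :: "pt set" where "Lam1 = gen2 (1, 1) (0, 2)"
definition Lam2 :: "pt set" where "Lam2 = UNIV \<times> {y. even y}"
text \<open>Lambda_{2i+1} for the odd prime p = p_i.\<close>
definition LamOdd :: "int \<Rightarrow> pt set" where "LamOdd p = gen2 (2 * p, 1) (0, 2)"
definition LamEven :: "nat \<Rightarrow> pt set" where "LamEven i = gen2 (2 ^ (i + 1), 1) (0, 2)"

definition M_B :: "pt set" where
  "M_B = Lam1 \<union> Lam2 \<union> (\<Union>p\<in>{p::int. prime p \<and> odd p}. LamOdd p)
         \<union> (\<Union>i\<in>{i::nat. i \<ge> 1}. LamEven i)"

definition F_B :: "pt set" where "F_B = UNIV - M_B"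

definition eta :: config where "eta g = (g \<in> F_B)"

definition shift :: "pt \<Rightarrow> config \<Rightarrow> config" where
  "shift n x = (\<lambda>g. x (padd g n))"

definition prod_top :: "config topology" where
  "prod_top = product_topology (\<lambda>_. discrete_topology (UNIV :: bool set)) UNIV"

definition orbit_closure :: "config \<Rightarrow> config set" where
  "orbit_closure x = prod_top closure_of {shift n x | n. True}"

definition D :: "config \<Rightarrow> config \<Rightarrow> real" where
  "D x y = (if x = y then 0 else
     inverse (2 ^ (LEAST k::nat. \<exists>g. \<bar>fst g\<bar> \<le> int k \<and> \<bar>snd g\<bar> \<le> int k \<and> x g \<noteq> y g)))"

text \<open>Proximality: liminf over n -> infinity in Z^2 (cofinite filter) of D(S_n x, S_n y) is 0.\<close>
definition proximal :: "config set \<Rightarrow> bool" where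
  "proximal X \<longleftrightarrow> (\<forall>x\<in>X. \<forall>y\<in>X.
      Liminf cofinite (\<lambda>n. ereal (D (shift n x) (shift n y))) = 0)"

end

theory Submission imports Defs begin

text \<open>
  A point (x, y) with y even lies in Lambda_2, and one with y odd lies in (a, 1)Z + (0, 2)Z
  exactly when x = a k with k odd; the moduli a = 1, 2p, 2^(i+1) catch every x outside
  {-2, 0, 2}, and none of them catches -2, 0 or 2.

  Hence every configuration in the orbit closure of eta is supported in a vertical strip of
  width 4. Shifting two such configurations far enough to the right makes both vanish on a
  large box, so they are proximal.

  A lattice inside M_B contains no point (0, y) with y odd, so all its 2x2 determinants are
  even: its reduction mod 2 lies in one of the three lines of F_2^2. Two lattices reducing
  into the same line cannot be coprime, so at most three lattices in M_B are pairwise coprime.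
\<close>

lemma mem_gen2_shear:
  "(x, y) \<in> gen2 (a, 1) (0, 2) \<longleftrightarrow> (\<exists>k. x = a * k \<and> even (y - k))"
proof
  assume "(x, y) \<in> gen2 (a, 1) (0, 2)"
  then show "\<exists>k. x = a * k \<and> even (y - k)" by (auto simp: gen2_def)
next
  assume "\<exists>k. x = a * k \<and> even (y - k)"
  then obtain k where k: "x = a * k" "even (y - k)" by blast
  from k(2) obtain m where "y - k = 2 * m" by (rule evenE)
  with k(1) show "(x, y) \<in> gen2 (a, 1) (0, 2)"
    unfolding gen2_def by (intro CollectI exI[of _ k] exI[of _ m]) auto
qed

lemma M_B_odd_row:
  assumes "odd y"
  shows "(x, y) \<in> M_B \<longleftrightarrow> odd x
     \<or> (\<exists>p k. prime p \<and> odd p \<and> x = 2 * p * k \<and> odd k)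
     \<or> (\<exists>i\<ge>1. \<exists>k. x = 2 ^ (i + 1) * k \<and> odd k)"
proof -
  have "(x, y) \<in> gen2 (a, 1) (0, 2) \<longleftrightarrow> (\<exists>k. x = a * k \<and> odd k)" for a
    using assms by (auto simp: mem_gen2_shear)
  with assms show ?thesis
    by (simp add: M_B_def Lam1_def Lam2_def LamOdd_def LamEven_def)
qed

lemma int_odd_cofactor_divisor:
  fixes t :: int
  assumes "t \<notin> {-1, 0, 1}"
  shows "(\<exists>p k. prime p \<and> odd p \<and> t = p * k \<and> odd k) \<or> (\<exists>i\<ge>1. \<exists>k. t = 2 ^ i * k \<and> odd k)"
proof (cases "even t")
  case True
  obtain k where k: "t = 2 ^ multiplicity 2 t * k" "\<not> 2 dvd k"
    by (rule multiplicity_decompose') (use assms in auto)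
  have "multiplicity 2 t \<ge> 1"
    using True assms by (simp add: multiplicity_gt_zero_iff Suc_le_eq)
  with k show ?thesis by auto
next
  case False
  then have "\<bar>t\<bar> \<noteq> 1" using assms by auto
  then obtain p where p: "prime p" "p dvd t" by (rule prime_factor_int)
  then obtain k where "t = p * k" by (auto elim: dvdE)
  with False p show ?thesis by auto
qed

lemma odd_multiple_notin_small:
  fixes a k :: int
  assumes "\<bar>a\<bar> > 2" "odd k"
  shows "a * k \<notin> {-2, 0, 2}"
proof -
  have "\<bar>k\<bar> \<ge> 1" using assms(2) by (cases "k = 0") auto
  then have "\<bar>a * k\<bar> \<ge> \<bar>a\<bar>" by (simp add: abs_mult mult_le_cancel_left1)
  with assms(1) show ?thesis by auto
qed

lemma F_B_eq: "F_B = {-2, 0, 2} \<times> {y. odd y}"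
proof (intro set_eqI)
  fix g :: pt
  obtain x y where g: "g = (x, y)" by fastforce
  have "(x, y) \<in> M_B" if "even y" using that by (simp add: M_B_def Lam2_def)
  moreover have "(x, y) \<in> M_B \<longleftrightarrow> x \<notin> {-2, 0, 2}" if "odd y"
  proof
    assume "(x, y) \<in> M_B"
    then consider "odd x" | p k where "prime p" "odd p" "x = 2 * p * k" "odd k"
      | i k where "i \<ge> 1" "x = 2 ^ (i + 1) * k" "odd k"
      unfolding M_B_odd_row[OF \<open>odd y\<close>] by blast
    then show "x \<notin> {-2, 0, 2}"
    proof cases
      case 1
      then show ?thesis by auto
    next
      case 2
      have "\<bar>2 * p\<bar> > 2" using prime_ge_2_int[OF \<open>prime p\<close>] by simp
      from odd_multiple_notin_small[OF this \<open>odd k\<close>] show ?thesis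
        unfolding \<open>x = 2 * p * k\<close> .
    next
      case 3
      have "\<bar>(2::int) ^ (i + 1)\<bar> > 2"
        using power_strict_increasing[of 1 "i + 1" "2::int"] \<open>i \<ge> 1\<close> by simp
      from odd_multiple_notin_small[OF this \<open>odd k\<close>] show ?thesis
        unfolding \<open>x = 2 ^ (i + 1) * k\<close> .
    qed
  next
    assume x: "x \<notin> {-2, 0, 2}"
    show "(x, y) \<in> M_B"
    proof (cases "odd x")
      case True
      then show ?thesis unfolding M_B_odd_row[OF \<open>odd y\<close>] by (rule disjI1)
    next
      case False
      then obtain t where t: "x = 2 * t" by (auto elim: evenE)
      with x have "t \<notin> {-1, 0, 1}" by auto
      then consider p k where "prime p" "odd p" "t = p * k" "odd k"
        | i k where "i \<ge> 1" "t = 2 ^ i * k" "odd k"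
        using int_odd_cofactor_divisor by blast
      then show ?thesis
      proof cases
        case 1
        then have "x = 2 * p * k" using t by simp
        with 1 show ?thesis unfolding M_B_odd_row[OF \<open>odd y\<close>] by (intro disjI2 disjI1 exI conjI)
      next
        case 2
        then have "x = 2 ^ (i + 1) * k" using t by simp
        with 2 show ?thesis unfolding M_B_odd_row[OF \<open>odd y\<close>] by (intro disjI2 exI conjI)
      qed
    qed
  qed
  ultimately show "g \<in> F_B \<longleftrightarrow> g \<in> {-2, 0, 2} \<times> {y. odd y}"
    by (cases "even y") (auto simp: F_B_def g)
qed

lemma lattice_scale:
  assumes L: "is_lattice L" and u: "u \<in> L"
  shows "(k * fst u, k * snd u) \<in> L"
proof -
  have nat_multiple: "(int n * fst u, int n * snd u) \<in> L" for n
  proof (induction n)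
    case 0
    then show ?case using L by (simp add: is_lattice_def)
  next
    case (Suc n)
    then have "padd (int n * fst u, int n * snd u) u \<in> L"
      using L u by (simp add: is_lattice_def)
    then show ?case by (simp add: padd_def algebra_simps)
  qed
  show ?thesis
  proof (cases "k \<ge> 0")
    case True
    then show ?thesis using nat_multiple[of "nat k"] by simp
  next
    case False
    then have "(- k * fst u, - k * snd u) \<in> L" using nat_multiple[of "nat (- k)"] by simp
    moreover have "\<forall>a\<in>L. (- fst a, - snd a) \<in> L" using L by (simp add: is_lattice_def)
    ultimately have "(- (- k * fst u), - (- k * snd u)) \<in> L" by fastforce
    then show ?thesis by simp
  qed
qed

lemma lattice_det_even:
  assumes L: "is_lattice L" and odd_axis: "\<And>y. odd y \<Longrightarrow> (0, y) \<notin> L"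
    and ab: "(a, b) \<in> L" and cd: "(c, d) \<in> L"
  shows "even (a * d - b * c)"
proof (rule ccontr)
  assume odd_det: "odd (a * d - b * c)"
  have "padd (c * a, c * b) (- a * c, - a * d) \<in> L"
    using lattice_scale[OF L ab, of c] lattice_scale[OF L cd, of "- a"] L
    by (simp add: is_lattice_def)
  moreover have "padd (c * a, c * b) (- a * c, - a * d) = (0, - (a * d - b * c))"
    by (simp add: padd_def algebra_simps)
  ultimately show False using odd_axis odd_det by auto
qed

text \<open>The three subgroups of index 2 in Z^2, i.e. the preimages of the lines of F_2^2.\<close>

definition parity_lines :: "pt set set" where
  "parity_lines = {{g. even (snd g)}, {g. even (fst g)}, {g. even (fst g + snd g)}}"

lemma subset_parity_line_if_dets_even:
  assumes dets: "\<And>a b c d. (a, b) \<in> S \<Longrightarrow> (c, d) \<in> S \<Longrightarrow> even (a * d - b * c)"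
  shows "\<exists>H \<in> parity_lines. S \<subseteq> H"
proof (rule ccontr)
  assume "\<not> ?thesis"
  then have "\<not> S \<subseteq> {g. even (snd g)}" "\<not> S \<subseteq> {g. even (fst g)}"
    "\<not> S \<subseteq> {g. even (fst g + snd g)}"
    by (simp_all add: parity_lines_def)
  then obtain g1 g2 g3 where "g1 \<in> S" "odd (snd g1)" "g2 \<in> S" "odd (fst g2)"
    "g3 \<in> S" "odd (fst g3 + snd g3)"
    by blast
  then obtain a b c d e f where ab: "(a, b) \<in> S" "odd b" and cd: "(c, d) \<in> S" "odd c"
    and ef: "(e, f) \<in> S" "odd (e + f)"
    by (metis prod.collapse)
  have "odd a" using dets[OF ab(1) cd(1)] ab(2) cd(2) by auto
  then show False using dets[OF ab(1) ef(1)] ab(2) ef(2) by auto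
qed

lemma parity_line_add: "H \<in> parity_lines \<Longrightarrow> a \<in> H \<Longrightarrow> b \<in> H \<Longrightarrow> padd a b \<in> H"
  by (auto simp: parity_lines_def padd_def)

lemma parity_line_proper: "H \<in> parity_lines \<Longrightarrow> H \<noteq> UNIV"
proof -
  assume "H \<in> parity_lines"
  then have "(0, 1) \<notin> H \<or> (1, 0) \<notin> H" by (auto simp: parity_lines_def)
  then show "H \<noteq> UNIV" by blast
qed

lemma parity_line_not_coprime:
  assumes H: "H \<in> parity_lines" and "L \<subseteq> H" "L' \<subseteq> H"
  shows "\<not> lattice_coprime L L'"
proof
  assume "lattice_coprime L L'"
  then have "UNIV \<subseteq> {padd a b | a b. a \<in> L \<and> b \<in> L'}" by (simp add: lattice_coprime_def)
  also have "\<dots> \<subseteq> H" using parity_line_add[OF H] \<open>L \<subseteq> H\<close> \<open>L' \<subseteq> H\<close> by blast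
  finally show False using parity_line_proper[OF H] by blast
qed

lemma card_pairwise_coprime_lattices_le_3:
  assumes lattices: "\<And>j. j \<in> J \<Longrightarrow> is_lattice (L j)"
    and odd_axis: "\<And>j y. j \<in> J \<Longrightarrow> odd y \<Longrightarrow> (0, y) \<notin> L j"
    and coprime: "\<And>j k. j \<in> J \<Longrightarrow> k \<in> J \<Longrightarrow> j \<noteq> k \<Longrightarrow> lattice_coprime (L j) (L k)"
  shows "finite J \<and> card J \<le> 3"
proof -
  have "\<exists>H \<in> parity_lines. L j \<subseteq> H" if j: "j \<in> J" for j
  proof (rule subset_parity_line_if_dets_even, rule lattice_det_even)
    show "is_lattice (L j)" by (rule lattices[OF j])
    show "(0, y) \<notin> L j" if "odd y" for y by (rule odd_axis[OF j that])
  qed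
  then obtain H where H: "\<And>j. j \<in> J \<Longrightarrow> H j \<in> parity_lines \<and> L j \<subseteq> H j" by metis
  have "inj_on H J"
  proof (rule inj_onI, rule ccontr)
    fix j k assume jk: "j \<in> J" "k \<in> J" "H j = H k" "j \<noteq> k"
    then have "\<not> lattice_coprime (L j) (L k)"
      using H[OF jk(1)] H[OF jk(2)] by (intro parity_line_not_coprime[of "H j"]) simp_all
    with coprime[OF jk(1,2,4)] show False by contradiction
  qed
  moreover have "H ` J \<subseteq> parity_lines" using H by blast
  moreover have "finite parity_lines" by (simp add: parity_lines_def)
  moreover have "card parity_lines \<le> 3"
    using card_length[of "[{g::pt. even (snd g)}, {g. even (fst g)}, {g. even (fst g + snd g)}]"]
    by (simp only: parity_lines_def list.set list.size)
  ultimately show ?thesis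
    by (meson card_inj_on_le finite_imageD finite_subset le_trans)
qed

lemma closedin_prod_top_coordinate: "closedin prod_top {x. P (x g)}"
proof -
  have "closedin prod_top {x \<in> topspace prod_top. x g \<in> {b. P b}}"
    unfolding prod_top_def
    by (rule closedin_continuous_map_preimage[OF continuous_map_product_projection]) auto
  then show ?thesis by (simp add: prod_top_def)
qed

definition strip_configs :: "int \<Rightarrow> config set" where
  "strip_configs w = {x. \<forall>g h. x g \<longrightarrow> x h \<longrightarrow> fst h - fst g \<le> w}"

lemma closedin_strip_configs: "closedin prod_top (strip_configs w)"
proof -
  have "strip_configs w =
      (\<Inter>g. \<Inter>h. {x. x g \<longrightarrow> fst h - fst g \<le> w} \<union> {x. x h \<longrightarrow> fst h - fst g \<le> w})"
    unfolding strip_configs_def by blast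
  also have "closedin prod_top \<dots>"
    by (intro closedin_INT closedin_Un closedin_prod_top_coordinate) auto
  finally show ?thesis .
qed

lemma strip_configs_bounded_right:
  assumes "x \<in> strip_configs w"
  shows "\<exists>c. \<forall>g. x g \<longrightarrow> fst g \<le> c"
proof (cases "\<exists>g. x g")
  case True
  then obtain g0 where "x g0" by blast
  with assms have "\<forall>g. x g \<longrightarrow> fst g - fst g0 \<le> w" unfolding strip_configs_def by blast
  then have "\<forall>g. x g \<longrightarrow> fst g \<le> w + fst g0" by (meson diff_le_eq)
  then show ?thesis by blast
qed auto

lemma orbit_closure_eta_strip: "orbit_closure eta \<subseteq> strip_configs 4"
  unfolding orbit_closure_def
proof (rule closure_of_minimal[OF _ closedin_strip_configs])
  have "fst h - fst g \<le> 4" if "shift n eta g" "shift n eta h" for n g h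
  proof -
    have "fst (padd g n) \<in> {-2, 0, 2}" "fst (padd h n) \<in> {-2, 0, 2}"
      using that by (simp_all add: shift_def eta_def F_B_eq mem_Times_iff)
    then show ?thesis by (auto simp: padd_def)
  qed
  then show "{shift n eta | n. True} \<subseteq> strip_configs 4"
    unfolding strip_configs_def by blast
qed

lemma D_nonneg: "0 \<le> D x y"
  by (simp add: D_def)

lemma D_le_if_agree_on_box:
  assumes agree: "\<And>g. \<bar>fst g\<bar> \<le> int K \<Longrightarrow> \<bar>snd g\<bar> \<le> int K \<Longrightarrow> x g = y g"
  shows "D x y \<le> inverse (2 ^ K)"
proof (cases "x = y")
  case False
  define P where "P k \<longleftrightarrow> (\<exists>g. \<bar>fst g\<bar> \<le> int k \<and> \<bar>snd g\<bar> \<le> int k \<and> x g \<noteq> y g)" for k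
  from False obtain g where "x g \<noteq> y g" by blast
  then have "P (nat (max \<bar>fst g\<bar> \<bar>snd g\<bar>))" unfolding P_def by (intro exI[of _ g]) auto
  then have "P (LEAST k. P k)" by (rule LeastI)
  with agree have "K < (LEAST k. P k)" by (force simp: P_def)
  then have "(2::real) ^ K \<le> 2 ^ (LEAST k. P k)" by (intro power_increasing) auto
  then show ?thesis using False by (simp add: D_def P_def[abs_def] le_imp_inverse_le)
qed (simp add: D_def)

lemma Liminf_cofinite_eq_0:
  fixes f :: "'a \<Rightarrow> real"
  assumes nonneg: "\<And>z. 0 \<le> f z" and small: "\<And>e. 0 < e \<Longrightarrow> infinite {z. f z < e}"
  shows "Liminf cofinite (\<lambda>z. ereal (f z)) = 0"
proof (rule antisym)
  show "0 \<le> Liminf cofinite (\<lambda>z. ereal (f z))"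
    by (rule Liminf_bounded) (simp add: nonneg)
  show "Liminf cofinite (\<lambda>z. ereal (f z)) \<le> 0"
  proof (rule ccontr)
    assume "\<not> ?thesis"
    then obtain e where e: "0 < ereal e" "ereal e < Liminf cofinite (\<lambda>z. ereal (f z))"
      using ereal_dense2 by (metis not_le)
    then have "eventually (\<lambda>z. ereal e < ereal (f z)) cofinite"
      using le_Liminf_iff[THEN iffD1, OF order_refl] by blast
    then have "finite {z. \<not> e < f z}" by (simp add: eventually_cofinite)
    then have "finite {z. f z < e}" by (rule finite_subset[rotated]) auto
    with small e(1) show False by simp
  qed
qed

lemma proximal_if_bounded_right:
  assumes bounded: "\<And>x. x \<in> X \<Longrightarrow> \<exists>c. \<forall>g. x g \<longrightarrow> fst g \<le> c"
  shows "proximal X"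
  unfolding proximal_def
proof (intro ballI Liminf_cofinite_eq_0 D_nonneg)
  fix x y and e :: real
  assume "x \<in> X" "y \<in> X" "0 < e"
  obtain cx cy where "\<And>g. x g \<Longrightarrow> fst g \<le> cx" "\<And>g. y g \<Longrightarrow> fst g \<le> cy"
    using bounded[OF \<open>x \<in> X\<close>] bounded[OF \<open>y \<in> X\<close>] by blast
  then obtain c where c: "\<And>g. x g \<or> y g \<Longrightarrow> fst g \<le> c"
    by (metis max.coboundedI1 max.coboundedI2)
  obtain K where K: "(1 / 2) ^ K < e" using real_arch_pow_inv[OF \<open>0 < e\<close>, of "1 / 2"] by auto
  define n where "n m = (c + int K + 1 + int m, 0 :: int)" for m :: nat
  have "D (shift (n m) x) (shift (n m) y) \<le> inverse (2 ^ K)" for m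
  proof (rule D_le_if_agree_on_box)
    fix g :: pt assume "\<bar>fst g\<bar> \<le> int K"
    then have "c < fst (padd g (n m))" by (simp add: padd_def n_def)
    then have "\<not> x (padd g (n m)) \<and> \<not> y (padd g (n m))" using c not_le by blast
    then show "shift (n m) x g = shift (n m) y g" by (simp add: shift_def)
  qed
  moreover have "inverse (2 ^ K) = (1 / 2 :: real) ^ K"
    by (simp add: power_one_over inverse_eq_divide)
  ultimately have "D (shift (n m) x) (shift (n m) y) < e" for m
    using K by (metis le_less_trans)
  then have "range n \<subseteq> {n. D (shift n x) (shift n y) < e}" by blast
  moreover have "infinite (range n)"
    by (rule range_inj_infinite) (simp add: inj_def n_def)
  ultimately show "infinite {n. D (shift n x) (shift n y) < e}"
    using infinite_super by blast
qed

theorem mainTheorem12: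
  shows "F_B = {-2, 0, 2} \<times> {y. odd y}
    \<and> proximal (orbit_closure eta)
    \<and> \<not> (\<exists>L :: nat \<Rightarrow> pt set.
            (\<forall>j. proper_lattice (L j))
          \<and> (\<forall>j k. j \<noteq> k \<longrightarrow> lattice_coprime (L j) (L k))
          \<and> (\<Union>j. L j) \<subseteq> M_B)"
proof (intro conjI notI)
  show "F_B = {-2, 0, 2} \<times> {y. odd y}" by (rule F_B_eq)
  show "proximal (orbit_closure eta)"
    using orbit_closure_eta_strip strip_configs_bounded_right
    by (intro proximal_if_bounded_right) blast
next
  assume "\<exists>L :: nat \<Rightarrow> pt set. (\<forall>j. proper_lattice (L j))
          \<and> (\<forall>j k. j \<noteq> k \<longrightarrow> lattice_coprime (L j) (L k)) \<and> (\<Union>j. L j) \<subseteq> M_B"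
  then obtain L :: "nat \<Rightarrow> pt set" where "\<forall>j. proper_lattice (L j)"
    and coprime: "\<And>j k. j \<noteq> k \<Longrightarrow> lattice_coprime (L j) (L k)" and "(\<Union>j. L j) \<subseteq> M_B"
    by blast
  have "(0, y) \<notin> M_B" if "odd y" for y using that F_B_eq by (auto simp: F_B_def)
  with \<open>(\<Union>j. L j) \<subseteq> M_B\<close> have "(0, y) \<notin> L j" if "odd y" for j y using that by blast
  moreover have "is_lattice (L j)" for j
    using \<open>\<forall>j. proper_lattice (L j)\<close> by (simp add: proper_lattice_def)
  ultimately have "finite (UNIV :: nat set)"
    using coprime card_pairwise_coprime_lattices_le_3[of UNIV L] by blast
  then show False by simp
qed

end
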